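(* The group $(\delta+\mathbb{K}^m\langle\langle X\rangle\rangle,\circ,\delta)$ is an analytic Lie group (with respect to the Fréchet topology).
   Context: $\mathbb{K}\in\{\mathbb{R},\mathbb{C}\}$. $X=\{x_0,x_1,\ldots,x_m\}$ is a finite alphabet, $X^\ast$ its words (including $\emptyset$). $\mathbb{K}^m\langle\langle X\rangle\rangle$ is the space of maps $X^\ast\to\mathbb{K}^m$ with the Fréchet (product) topology from $\prod_{\eta}\mathbb{K}^m$. $\delta$ is a formal symbol and $\delta+\mathbb{K}^m\langle\langle X\rangle\rangle=\{c_\delta:=\delta+c\}$ is identified with $\mathbb{K}^m\langle\langle X\rangle\rangle$ as a manifold. The shuffle product $\sqcup\!\sqcup$ is determined on words by $(x_i\eta)\sqcup\!\sqcup(x_j\xi)=x_i(\eta\sqcup\!\sqcup(x_j\xi))+x_j((x_i\eta)\sqcup\!\sqcup\xi)$, $\eta\sqcup\!\sqcup\emptyset=\emptyset\sqcup\!\sqcup\eta=\eta$. Mixed composition: for $d$ with components $d[1],\ldots,d[m]$ and $d[0]:=0$, let $\phi_d(\emptyset)=\mathrm{id}$, $\phi_d(x_i\eta)=\phi_d(x_i)\circ\phi_d(\eta)$, $\phi_d(x_i)(e)=x_ie+x_0(d[i]\sqcup\!\sqcup e)$, and $c\,\tilde\circ\,d_\delta=\sum_\eta(c,\eta)\phi_d(\eta)(\mathbf{1})$ with $\mathbf{1}=1\cdot\emptyset$. The group product is $c_\delta\circ d_\delta=\delta+d+c\,\tilde\circ\,d_\delta$ with identity $\delta$. An analytic Lie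 group is a group with an analytic manifold structure making multiplication and inversion analytic, analyticity in the Bastiani sense (complex analytic = continuous with continuous iterated directional derivatives of all orders over $\mathbb{C}$; real analytic = extends to a complex analytic map on an open neighbourhood in the complexification). *)

theory Defs
  imports "HOL-Analysis.Analysis"
begin

text \<open>The alphabet X = {x_0, x_1, ..., x_m} is encoded as the type 'm option, where
  'm is a finite type with m elements: None stands for x_0 and Some i for x_i.
  A K^m-valued series c is encoded as a function on pairs (word, component index),
  i.e. c (eta, j) is the j-th component of the coefficient (c, eta).\<close>

type_synonym 'm word = "'m option list"
type_synonym ('m, 'k) ser = "'m word \<times> 'm \<Rightarrow> 'k"

text \<open>Shuffle coefficient: the coefficient of the word w in the shuffle product u sh v.\<close>
fun shcoef :: "'a list \<Rightarrow> 'a list \<Rightarrow> 'a list \<Rightarrow> nat" where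
  "shcoef [] v w = (if v = w then 1 else 0)"
| "shcoef (a # u) [] w = (if a # u = w then 1 else 0)"
| "shcoef (a # u) (b # v) [] = 0"
| "shcoef (a # u) (b # v) (c # w) =
     (if a = c then shcoef u (b # v) w else 0) + (if b = c then shcoef (a # u) v w else 0)"

text \<open>Shuffle product of scalar series (continuous bilinear extension; only pairs with
  length u + length v = length w contribute, so the sum is finite).\<close>
definition shuffle :: "('m::finite word \<Rightarrow> 'k::comm_ring_1) \<Rightarrow> ('m word \<Rightarrow> 'k) \<Rightarrow> 'm word \<Rightarrow> 'k" where
  "shuffle a b w = (\<Sum>(u, v) \<in> {u :: 'm word. length u \<le> length w} \<times> {v :: 'm word. length v \<le> length w}.
       a u * b v * of_nat (shcoef u v w))"

definition lcons :: "'m option \<Rightarrow> ('m word \<Rightarrow> 'k::zero) \<Rightarrow> 'm word \<Rightarrow> 'k" where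
  "lcons a e w = (case w of [] \<Rightarrow> 0 | b # w' \<Rightarrow> if b = a then e w' else 0)"

definition dcomp :: "('m, 'k::zero) ser \<Rightarrow> 'm option \<Rightarrow> 'm word \<Rightarrow> 'k" where
  "dcomp d a = (case a of None \<Rightarrow> (\<lambda>_. 0) | Some j \<Rightarrow> (\<lambda>w. d (w, j)))"

definition phi_letter :: "('m::finite, 'k::comm_ring_1) ser \<Rightarrow> 'm option \<Rightarrow> ('m word \<Rightarrow> 'k) \<Rightarrow> 'm word \<Rightarrow> 'k" where
  "phi_letter d a e = (\<lambda>w. lcons a e w + lcons None (shuffle (dcomp d a) e) w)"

primrec phi :: "('m::finite, 'k::comm_ring_1) ser \<Rightarrow> 'm word \<Rightarrow> ('m word \<Rightarrow> 'k) \<Rightarrow> 'm word \<Rightarrow> 'k" where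
  "phi d [] e = e"
| "phi d (a # eta) e = phi_letter d a (phi d eta e)"

definition one_ser :: "'m word \<Rightarrow> 'k::{zero,one}" where
  "one_ser w = (if w = [] then 1 else 0)"

text \<open>Since phi_d(eta)(1)
  is supported on words of length >= length eta, the coefficient at xi is the finite sum
  over eta with length eta <= length xi (this is the limit in the Frechet topology).\<close>
definition mixed_comp :: "('m::finite, 'k::comm_ring_1) ser \<Rightarrow> ('m, 'k) ser \<Rightarrow> ('m, 'k) ser" where
  "mixed_comp c d = (\<lambda>(xi, j). \<Sum>eta \<in> {eta :: 'm word. length eta \<le> length xi}.
       c (eta, j) * phi d eta one_ser xi)"

text \<open>Group product in the coordinates c_delta = delta + c:
  c_delta o d_delta = delta + d + c ~o d_delta; identity delta corresponds to 0.\<close>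
definition gmult :: "('m::finite, 'k::comm_ring_1) ser \<Rightarrow> ('m, 'k) ser \<Rightarrow> ('m, 'k) ser" where
  "gmult c d = (\<lambda>p. d p + mixed_comp c d p)"

text \<open>Iterated directional derivatives d^k f(x; v_1, ..., v_k) over C, computed
  coordinatewise (limits in the product topology are coordinatewise).\<close>
primrec cdd :: "(('i \<Rightarrow> complex) \<Rightarrow> ('j \<Rightarrow> complex)) \<Rightarrow> ('i \<Rightarrow> complex) list \<Rightarrow> ('i \<Rightarrow> complex) \<Rightarrow> 'j \<Rightarrow> complex" where
  "cdd f [] x = f x"
| "cdd f (v # vs) x = (\<lambda>j. Lim (at (0::complex))
       (\<lambda>t. (cdd f vs (\<lambda>i. x i + t * v i) j - cdd f vs x j) / t))"

text \<open>Complex analytic in the Bastiani sense on an open set U: continuous, all iterated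
  directional derivatives (over C) exist, and each d^k f is jointly continuous on U x E^k
  (E^k is represented by sequences of directions of which the first k are used).\<close>
definition bastiani_holomorphic_on :: "(('i \<Rightarrow> complex) \<Rightarrow> ('j \<Rightarrow> complex)) \<Rightarrow> ('i \<Rightarrow> complex) set \<Rightarrow> bool" where
  "bastiani_holomorphic_on f U \<longleftrightarrow>
     open U \<and> continuous_on U f \<and>
     (\<forall>x \<in> U. \<forall>v vs. ((\<lambda>t::complex. (\<lambda>j. (cdd f vs (\<lambda>i. x i + t * v i) j - cdd f vs x j) / t))
                         \<longlongrightarrow> cdd f (v # vs) x) (at 0)) \<and>
     (\<forall>k. continuous_on (U \<times> UNIV) (\<lambda>(x, V :: nat \<Rightarrow> 'i \<Rightarrow> complex). cdd f (map V [0..<k]) x))"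

definition bastiani_real_analytic_on :: "(('i \<Rightarrow> real) \<Rightarrow> ('j \<Rightarrow> real)) \<Rightarrow> ('i \<Rightarrow> real) set \<Rightarrow> bool" where
  "bastiani_real_analytic_on f U \<longleftrightarrow>
     open U \<and>
     (\<exists>V g. open V \<and> (\<lambda>x. complex_of_real \<circ> x) ` U \<subseteq> V \<and> bastiani_holomorphic_on g V \<and>
            (\<forall>x \<in> U. g (complex_of_real \<circ> x) = complex_of_real \<circ> f x))"

text \<open>The manifold E x E is identified with functions on the disjoint union of index sets.\<close>
definition analytic_lie_group_C :: "(('i \<Rightarrow> complex) \<Rightarrow> ('i \<Rightarrow> complex) \<Rightarrow> ('i \<Rightarrow> complex)) \<Rightarrow> ('i \<Rightarrow> complex) \<Rightarrow> bool" where
  "analytic_lie_group_C gm e \<longleftrightarrow>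
     (\<forall>a b c. gm (gm a b) c = gm a (gm b c)) \<and>
     (\<forall>a. gm a e = a \<and> gm e a = a) \<and>
     (\<exists>inv. (\<forall>a. gm a (inv a) = e \<and> gm (inv a) a = e) \<and> bastiani_holomorphic_on inv UNIV) \<and>
     bastiani_holomorphic_on (\<lambda>z. gm (z \<circ> Inl) (z \<circ> Inr)) UNIV"

definition analytic_lie_group_R :: "(('i \<Rightarrow> real) \<Rightarrow> ('i \<Rightarrow> real) \<Rightarrow> ('i \<Rightarrow> real)) \<Rightarrow> ('i \<Rightarrow> real) \<Rightarrow> bool" where
  "analytic_lie_group_R gm e \<longleftrightarrow>
     (\<forall>a b c. gm (gm a b) c = gm a (gm b c)) \<and>
     (\<forall>a. gm a e = a \<and> gm e a = a) \<and>
     (\<exists>inv. (\<forall>a. gm a (inv a) = e \<and> gm (inv a) a = e) \<and> bastiani_real_analytic_on inv UNIV) \<and>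
     bastiani_real_analytic_on (\<lambda>z. gm (z \<circ> Inl) (z \<circ> Inr)) UNIV"

end

(*
  The coefficient of a product c_delta o d_delta, or of an inverse, at a word xi is a
  polynomial in finitely many coefficients of the arguments, namely those at words of length
  at most |xi|.  A map on K^I whose coordinates are polynomials is Bastiani analytic for the
  product topology: its iterated directional derivatives are again polynomials in the point
  and the directions, hence continuous.  The group axioms rest on two identities of mixed
  composition: it is a shuffle homomorphism in c, and (c ~o d_delta) ~o e_delta =
  c ~o (d_delta o e_delta); both are proved by induction on the length of words, peeling off
  the first letter.  The inverse of c_delta solves d = -(c ~o d_delta), whose right-hand side
  at xi only involves d at shorter words.  The real group operations are restrictions of the
  complex ones, which gives real analyticity.
*)
theory Submission
  imports Defs
begin

section \<open>Shuffle product\<close>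

definition lquot :: "'a \<Rightarrow> ('a list \<Rightarrow> 'k) \<Rightarrow> 'a list \<Rightarrow> 'k" where
  "lquot c a = (\<lambda>u. a (c # u))"

lemma lquot_apply: "lquot c a u = a (c # u)"
  by (simp add: lquot_def)

lemma lcons_Nil [simp]: "lcons a e [] = 0"
  by (simp add: lcons_def)

lemma lcons_Cons [simp]: "lcons a e (b # w) = (if b = a then e w else 0)"
  by (simp add: lcons_def)

lemma finite_words_length_le [simp]: "finite {u :: 'm::finite word. length u \<le> n}"
  using finite_lists_length_le[of "UNIV :: 'm option set" n] by simp

definition word_pairs :: "nat \<Rightarrow> ('m::finite word \<times> 'm word) set" where
  "word_pairs n = {(u, v). length u + length v = n}"

lemma finite_word_pairs [simp]: "finite (word_pairs n :: ('m::finite word \<times> _) set)"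
  by (rule finite_subset[of _ "{u. length u \<le> n} \<times> {u. length u \<le> n}"]) (auto simp: word_pairs_def)

lemma shcoef_Nil2 [simp]: "shcoef u [] w = (if u = w then 1 else 0)"
  by (cases u) auto

lemma shcoef_eq_0: "length u + length v \<noteq> length w \<Longrightarrow> shcoef u v w = 0"
  by (induction u v w rule: shcoef.induct) (auto split: if_splits)

lemma shcoef_Cons3:
  "shcoef u v (c # w) =
     (if u \<noteq> [] \<and> hd u = c then shcoef (tl u) v w else 0) +
     (if v \<noteq> [] \<and> hd v = c then shcoef u (tl v) w else 0)"
  by (cases u; cases v) auto

lemma shuffle_eq_sum_word_pairs:
  "shuffle a b w = (\<Sum>(u, v)\<in>word_pairs (length w). a u * b v * of_nat (shcoef u v w))"
  unfolding shuffle_def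
  by (rule sum.mono_neutral_right) (auto simp: word_pairs_def, metis mult_zero_right of_nat_0 shcoef_eq_0)

lemma sum_word_pairs_Suc_left:
  "(\<Sum>p\<in>word_pairs (Suc n). if fst p \<noteq> [] \<and> hd (fst p) = c then F p else 0)
     = (\<Sum>(u, v)\<in>word_pairs n. F (c # u, v))"
proof -
  have "{p \<in> word_pairs (Suc n). fst p \<noteq> [] \<and> hd (fst p) = c} = (\<lambda>(u, v). (c # u, v)) ` word_pairs n"
    by (auto simp: word_pairs_def image_iff neq_Nil_conv)
  then show ?thesis
    by (simp add: sum.inter_filter[symmetric]) (subst sum.reindex; auto simp: inj_on_def case_prod_beta)
qed

lemma sum_word_pairs_Suc_right:
  "(\<Sum>p\<in>word_pairs (Suc n). if snd p \<noteq> [] \<and> hd (snd p) = c then F p else 0)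
     = (\<Sum>(u, v)\<in>word_pairs n. F (u, c # v))"
proof -
  have "{p \<in> word_pairs (Suc n). snd p \<noteq> [] \<and> hd (snd p) = c} = (\<lambda>(u, v). (u, c # v)) ` word_pairs n"
    by (auto simp: word_pairs_def image_iff neq_Nil_conv)
  then show ?thesis
    by (simp add: sum.inter_filter[symmetric]) (subst sum.reindex; auto simp: inj_on_def case_prod_beta)
qed

lemma shuffle_Nil: "shuffle a b [] = a [] * b []"
  by (simp add: shuffle_eq_sum_word_pairs word_pairs_def)

lemma shuffle_Cons: "shuffle a b (c # w) = shuffle (lquot c a) b w + shuffle a (lquot c b) w"
proof -
  have "shuffle a b (c # w) =
      (\<Sum>p\<in>word_pairs (Suc (length w)). if fst p \<noteq> [] \<and> hd (fst p) = c
         then a (fst p) * b (snd p) * of_nat (shcoef (tl (fst p)) (snd p) w) else 0) +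
      (\<Sum>p\<in>word_pairs (Suc (length w)). if snd p \<noteq> [] \<and> hd (snd p) = c
         then a (fst p) * b (snd p) * of_nat (shcoef (fst p) (tl (snd p)) w) else 0)"
    unfolding shuffle_eq_sum_word_pairs shcoef_Cons3 by (simp add: case_prod_beta distrib_left sum.distrib)
      (intro arg_cong2[where f = "(+)"] sum.cong; simp)
  then show ?thesis
    by (simp add: sum_word_pairs_Suc_left sum_word_pairs_Suc_right shuffle_eq_sum_word_pairs lquot_apply)
qed

lemma shuffle_cong:
  assumes "\<And>u. length u \<le> length w \<Longrightarrow> a u = a' u" "\<And>u. length u \<le> length w \<Longrightarrow> b u = b' u"
  shows "shuffle a b w = shuffle a' b' w"
  unfolding shuffle_def by (rule sum.cong) (auto simp: assms)

lemma shuffle_add_left: "shuffle (\<lambda>u. a u + a' u) b w = shuffle a b w + shuffle a' b w"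
  unfolding shuffle_def by (simp add: sum.distrib[symmetric] algebra_simps case_prod_beta)

lemma shuffle_add_right: "shuffle a (\<lambda>u. b u + b' u) w = shuffle a b w + shuffle a b' w"
  unfolding shuffle_def by (simp add: sum.distrib[symmetric] algebra_simps case_prod_beta)

lemma shuffle_sum_left: "shuffle (\<lambda>u. \<Sum>i\<in>I. f i u) b w = (\<Sum>i\<in>I. shuffle (f i) b w)"
  unfolding shuffle_def by (simp add: sum_distrib_right case_prod_beta sum.swap[of _ I])

lemma shuffle_sum_right: "shuffle a (\<lambda>u. \<Sum>i\<in>I. f i u) w = (\<Sum>i\<in>I. shuffle a (f i) w)"
  unfolding shuffle_def
  by (simp add: sum_distrib_left sum_distrib_right case_prod_beta sum.swap[of _ I] algebra_simps)

lemma shuffle_mult_right: "shuffle a (\<lambda>u. k * b u) w = k * shuffle a b w"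
  unfolding shuffle_def by (simp add: sum_distrib_left case_prod_beta algebra_simps)

lemma shuffle_zero_left [simp]: "shuffle (\<lambda>_. 0) b w = 0"
  unfolding shuffle_def by simp

lemma shuffle_zero_right [simp]: "shuffle a (\<lambda>_. 0) w = 0"
  unfolding shuffle_def by simp

lemma lquot_shuffle: "lquot c (shuffle a b) = (\<lambda>u. shuffle (lquot c a) b u + shuffle a (lquot c b) u)"
  by (simp add: lquot_def shuffle_Cons)

lemma shuffle_commute: "shuffle a b = shuffle b a"
proof
  show "shuffle a b w = shuffle b a w" for w
    by (induction w arbitrary: a b) (simp_all add: shuffle_Nil shuffle_Cons mult.commute add.commute)
qed

lemma shuffle_assoc: "shuffle (shuffle a b) e = shuffle a (shuffle b e)"
proof
  show "shuffle (shuffle a b) e w = shuffle a (shuffle b e) w" for w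
    by (induction w arbitrary: a b e)
      (simp_all add: shuffle_Nil shuffle_Cons lquot_shuffle shuffle_add_left shuffle_add_right mult.assoc)
qed

lemma shuffle_left_commute: "shuffle a (shuffle b e) = shuffle b (shuffle a e)"
  by (metis shuffle_assoc shuffle_commute)

section \<open>Mixed composition and the group law\<close>

definition scomp :: "('m::finite word \<Rightarrow> 'k::comm_ring_1) \<Rightarrow> ('m, 'k) ser \<Rightarrow> 'm word \<Rightarrow> 'k" where
  "scomp c d xi = (\<Sum>eta | length eta \<le> length xi. c eta * phi d eta one_ser xi)"

lemma mixed_comp_eq_scomp: "mixed_comp c d (xi, j) = scomp (dcomp c (Some j)) d xi"
  by (simp add: mixed_comp_def scomp_def dcomp_def)

lemma gmult_eq_scomp: "gmult c d (xi, j) = d (xi, j) + scomp (dcomp c (Some j)) d xi"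
  by (simp add: gmult_def mixed_comp_eq_scomp)

lemma dcomp_None [simp]: "dcomp d None = (\<lambda>_. 0)"
  by (simp add: dcomp_def)

lemma dcomp_zero [simp]: "dcomp (\<lambda>_. 0) a = (\<lambda>_. 0)"
  by (cases a) (simp_all add: dcomp_def)

lemma dcomp_gmult: "dcomp (gmult c d) a = (\<lambda>u. dcomp d a u + scomp (dcomp c a) d u)"
  by (cases a) (simp_all add: dcomp_def gmult_eq_scomp scomp_def)

lemma phi_eq_0_shorter: "length w < length eta \<Longrightarrow> phi d eta e w = 0"
proof (induction eta arbitrary: w)
  case (Cons a eta)
  show ?case
  proof (cases w)
    case (Cons b w')
    with Cons.prems have "length w' < length eta" by simp
    then have "shuffle (dcomp d a) (phi d eta e) w' = shuffle (dcomp d a) (\<lambda>_. 0) w'"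
      by (intro shuffle_cong Cons.IH) auto
    with \<open>length w' < length eta\<close> show ?thesis by (simp add: Cons phi_letter_def Cons.IH)
  qed (simp add: phi_letter_def)
qed simp

lemma scomp_eq_sum_length_le:
  "length xi \<le> n \<Longrightarrow> scomp c d xi = (\<Sum>eta | length eta \<le> n. c eta * phi d eta one_ser xi)"
  unfolding scomp_def by (rule sum.mono_neutral_left) (auto simp: phi_eq_0_shorter)

lemma sum_words_length_le_Suc:
  fixes f :: "'m::finite word \<Rightarrow> 'k::comm_monoid_add"
  shows "(\<Sum>eta | length eta \<le> Suc n. f eta) = f [] + (\<Sum>a\<in>UNIV. \<Sum>eta | length eta \<le> n. f (a # eta))"
proof -
  let ?h = "\<lambda>(a, eta). a # eta"
  have words: "{eta :: 'm word. length eta \<le> Suc n} = insert [] (?h ` (UNIV \<times> {eta. length eta \<le> n}))"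
  proof (rule set_eqI)
    show "x \<in> {eta. length eta \<le> Suc n} \<longleftrightarrow> x \<in> insert [] (?h ` (UNIV \<times> {eta. length eta \<le> n}))" for x
      by (cases x) (auto simp: image_iff)
  qed
  have "sum f (insert [] (?h ` (UNIV \<times> {eta. length eta \<le> n}))) = f [] + sum (f \<circ> ?h) (UNIV \<times> {eta. length eta \<le> n})"
    by (subst sum.insert) (auto simp: sum.reindex inj_on_def)
  then show ?thesis
    by (simp only: words) (simp add: sum.cartesian_product case_prod_beta o_def)
qed

lemma scomp_Nil [simp]: "scomp c d [] = c []"
  by (simp add: scomp_def one_ser_def)

lemma scomp_Cons:
  "scomp c d (b # w) = scomp (lquot b c) d w +
     (if b = None then \<Sum>a\<in>UNIV. shuffle (dcomp d a) (scomp (lquot a c) d) w else 0)"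
proof -
  let ?P = "\<lambda>eta. phi d eta one_ser"
  let ?W = "{eta. length eta \<le> length w}"
  have letter: "c (a # eta) * ?P (a # eta) (b # w) =
      (if a = b then c (a # eta) * ?P eta w else 0) +
      (if b = None then c (a # eta) * shuffle (dcomp d a) (?P eta) w else 0)" for a eta
    by (simp add: phi_letter_def distrib_left)
  have first: "(\<Sum>a\<in>UNIV. \<Sum>eta\<in>?W. if a = b then c (a # eta) * ?P eta w else 0) = scomp (lquot b c) d w"
    by (subst sum.swap) (simp add: scomp_def lquot_apply)
  have shuffle_term: "(\<Sum>eta\<in>?W. c (a # eta) * shuffle (dcomp d a) (?P eta) w)
      = shuffle (dcomp d a) (scomp (lquot a c) d) w" for a
  proof -
    have "(\<Sum>eta\<in>?W. c (a # eta) * shuffle (dcomp d a) (?P eta) w)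
        = shuffle (dcomp d a) (\<lambda>u. \<Sum>eta\<in>?W. c (a # eta) * ?P eta u) w"
      by (simp add: shuffle_sum_right shuffle_mult_right)
    also have "\<dots> = shuffle (dcomp d a) (scomp (lquot a c) d) w"
      by (rule shuffle_cong) (simp_all add: scomp_eq_sum_length_le lquot_apply)
    finally show ?thesis .
  qed
  have "scomp c d (b # w) = (\<Sum>a\<in>UNIV. \<Sum>eta\<in>?W. c (a # eta) * ?P (a # eta) (b # w))"
    by (simp add: scomp_def sum_words_length_le_Suc one_ser_def)
  also have "\<dots> = (\<Sum>a\<in>UNIV. \<Sum>eta\<in>?W. if a = b then c (a # eta) * ?P eta w else 0) +
      (\<Sum>a\<in>UNIV. \<Sum>eta\<in>?W. if b = None then c (a # eta) * shuffle (dcomp d a) (?P eta) w else 0)"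
    by (simp only: letter sum.distrib)
  also have "\<dots> = scomp (lquot b c) d w +
      (if b = None then \<Sum>a\<in>UNIV. shuffle (dcomp d a) (scomp (lquot a c) d) w else 0)"
    unfolding first by (cases b) (simp_all add: shuffle_term)
  finally show ?thesis .
qed

lemma lquot_scomp:
  "lquot b (scomp c d) = (\<lambda>u. scomp (lquot b c) d u +
     (if b = None then \<Sum>a\<in>UNIV. shuffle (dcomp d a) (scomp (lquot a c) d) u else 0))"
  by (simp add: lquot_def scomp_Cons)

lemma scomp_add_left: "scomp (\<lambda>u. c u + c' u) d w = scomp c d w + scomp c' d w"
  by (simp add: scomp_def sum.distrib distrib_right)

lemma scomp_sum_left: "scomp (\<lambda>u. \<Sum>i\<in>I. c i u) d w = (\<Sum>i\<in>I. scomp (c i) d w)"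
  by (simp add: scomp_def sum_distrib_right sum.swap[of _ I])

lemma scomp_zero_left [simp]: "scomp (\<lambda>_. 0) d w = 0"
  by (simp add: scomp_def)

lemma scomp_shuffle: "scomp (shuffle a b) e w = shuffle (scomp a e) (scomp b e) w"
proof (induction w arbitrary: a b rule: length_induct)
  case (1 w)
  show ?case
  proof (cases w)
    case Nil
    then show ?thesis by (simp add: shuffle_Nil)
  next
    case (Cons c w')
    have IH: "scomp (shuffle a b) e u = shuffle (scomp a e) (scomp b e) u"
      if "length u \<le> length w'" for u a b
      using 1 that by (simp add: Cons)
    let ?A = "scomp a e" and ?B = "scomp b e"
    let ?Ax = "\<lambda>x. scomp (lquot x a) e" and ?Bx = "\<lambda>x. scomp (lquot x b) e"
    show ?thesis
    proof (cases c)
      case None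
      have "scomp (shuffle a b) e w = scomp (lquot None (shuffle a b)) e w' +
          (\<Sum>x\<in>UNIV. shuffle (dcomp e x) (scomp (lquot x (shuffle a b)) e) w')"
        by (simp add: Cons None scomp_Cons)
      also have "\<dots> = shuffle (?Ax None) ?B w' + shuffle ?A (?Bx None) w' +
          (\<Sum>x\<in>UNIV. shuffle (dcomp e x) (\<lambda>u. shuffle (?Ax x) ?B u + shuffle ?A (?Bx x) u) w')"
        by (simp add: lquot_shuffle scomp_add_left IH cong: shuffle_cong)
      also have "\<dots> = shuffle (lquot None ?A) ?B w' + shuffle ?A (lquot None ?B) w'"
        by (simp add: lquot_scomp shuffle_add_left shuffle_add_right shuffle_sum_left shuffle_sum_right
            shuffle_assoc shuffle_left_commute[of ?A] sum.distrib)
      also have "\<dots> = shuffle ?A ?B w"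
        by (simp add: Cons None shuffle_Cons)
      finally show ?thesis .
    next
      case (Some j)
      then show ?thesis
        by (simp add: Cons scomp_Cons shuffle_Cons lquot_shuffle lquot_scomp scomp_add_left IH)
    qed
  qed
qed

lemma scomp_gmult: "scomp (scomp c d) e w = scomp c (gmult d e) w"
proof (induction w arbitrary: c rule: length_induct)
  case (1 w)
  show ?case
  proof (cases w)
    case Nil
    then show ?thesis by simp
  next
    case (Cons b w')
    have IH: "scomp (scomp c d) e u = scomp c (gmult d e) u" if "length u \<le> length w'" for u c
      using 1 that by (simp add: Cons)
    let ?G = "gmult d e"
    have tail: "shuffle (dcomp e x) (scomp (lquot x (scomp c d)) e) w' =
        shuffle (dcomp e x) (scomp (lquot x c) ?G) w'" for x
      by (cases x) (simp_all add: lquot_scomp IH cong: shuffle_cong)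
    show ?thesis
    proof (cases b)
      case None
      have "scomp (scomp c d) e w = scomp (lquot None (scomp c d)) e w' +
          (\<Sum>x\<in>UNIV. shuffle (dcomp e x) (scomp (lquot x (scomp c d)) e) w')"
        by (simp add: Cons None scomp_Cons)
      also have "\<dots> = scomp (lquot None c) ?G w' +
          (\<Sum>x\<in>UNIV. shuffle (scomp (dcomp d x) e) (scomp (lquot x c) ?G) w') +
          (\<Sum>x\<in>UNIV. shuffle (dcomp e x) (scomp (lquot x c) ?G) w')"
        by (simp only: tail) (simp add: lquot_scomp scomp_add_left scomp_sum_left scomp_shuffle IH cong: shuffle_cong)
      also have "\<dots> = scomp c ?G w"
        by (simp add: Cons None scomp_Cons dcomp_gmult shuffle_add_left sum.distrib)
      finally show ?thesis .
    next
      case (Some j)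
      then show ?thesis
        by (simp add: Cons scomp_Cons lquot_scomp IH)
    qed
  qed
qed

lemma scomp_zero_right [simp]: "scomp c (\<lambda>_. 0) w = c w"
proof (induction w arbitrary: c)
  case (Cons b w)
  then show ?case
    by (simp add: scomp_Cons Cons lquot_apply)
qed simp

lemma gmult_assoc:
  fixes a b c :: "('m::finite, 'k::comm_ring_1) ser"
  shows "gmult (gmult a b) c = gmult a (gmult b c)"
proof
  fix p :: "'m::finite word \<times> 'm"
  obtain xi j where p: "p = (xi, j)" by force
  show "gmult (gmult a b) c p = gmult a (gmult b c) p"
    by (simp add: p gmult_eq_scomp dcomp_gmult scomp_add_left scomp_gmult)
qed

lemma gmult_zero_right [simp]: "gmult a (\<lambda>_. 0) = a"
  by (auto simp: fun_eq_iff gmult_eq_scomp dcomp_def)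

lemma gmult_zero_left [simp]: "gmult (\<lambda>_. 0) a = a"
  by (auto simp: fun_eq_iff gmult_eq_scomp dcomp_def)

section \<open>The inverse\<close>

lemma phi_cong_shorter:
  assumes "\<And>u j. length u < length w \<Longrightarrow> d (u, j) = d' (u, j)"
  shows "phi d eta e w = phi d' eta e w"
  using assms
proof (induction eta arbitrary: w)
  case (Cons a eta)
  show ?case
  proof (cases w)
    case (Cons b w')
    have "shuffle (dcomp d a) (phi d eta e) w' = shuffle (dcomp d' a) (phi d' eta e) w'"
    proof (rule shuffle_cong)
      fix u :: "'a word"
      assume "length u \<le> length w'"
      then have shorter: "length v < length w" if "length v \<le> length u" for v :: "'a word"
        using that by (simp add: Cons)
      show "dcomp d a u = dcomp d' a u"
        using Cons.prems shorter by (cases a) (simp_all add: dcomp_def)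
      show "phi d eta e u = phi d' eta e u"
        using Cons.prems shorter by (intro Cons.IH) simp
    qed
    moreover have "phi d eta e w' = phi d' eta e w'"
      using Cons.prems by (intro Cons.IH) (simp add: \<open>w = b # w'\<close>)
    ultimately show ?thesis
      by (simp add: Cons phi_letter_def)
  qed (simp add: phi_letter_def)
qed simp

lemma mixed_comp_cong_shorter:
  assumes "\<And>u j. length u < length xi \<Longrightarrow> d (u, j) = d' (u, j)"
  shows "mixed_comp c d (xi, j) = mixed_comp c d' (xi, j)"
proof -
  have "phi d eta one_ser xi = phi d' eta one_ser xi" for eta
    by (rule phi_cong_shorter) (rule assms)
  then show ?thesis
    by (simp add: mixed_comp_def)
qed

text \<open>The inverse d of c solves d = inv_step c d.  Since mixed_comp c d at xi only involves d
  at words shorter than xi, n iterations starting from 0 are exact on words of length < n.\<close>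
definition inv_step :: "('m::finite, 'k::comm_ring_1) ser \<Rightarrow> ('m, 'k) ser \<Rightarrow> ('m, 'k) ser" where
  "inv_step c d = (\<lambda>p. - mixed_comp c d p)"

lemma inv_step_apply: "inv_step c d (xi, j) = - mixed_comp c d (xi, j)"
  by (simp add: inv_step_def)

definition ginv :: "('m::finite, 'k::comm_ring_1) ser \<Rightarrow> ('m, 'k) ser" where
  "ginv c = (\<lambda>p. (inv_step c ^^ Suc (length (fst p))) (\<lambda>_. 0) p)"

lemma inv_step_iterate_stable:
  "length xi < n \<Longrightarrow> (inv_step c ^^ (n + k)) (\<lambda>_. 0) (xi, j) = (inv_step c ^^ n) (\<lambda>_. 0) (xi, j)"
proof (induction n arbitrary: xi j)
  case (Suc n)
  have "mixed_comp c ((inv_step c ^^ (n + k)) (\<lambda>_. 0)) (xi, j) = mixed_comp c ((inv_step c ^^ n) (\<lambda>_. 0)) (xi, j)"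
    using Suc by (intro mixed_comp_cong_shorter) simp
  then show ?case
    by (simp add: inv_step_apply)
qed simp

lemma ginv_eq_iterate: "length xi < n \<Longrightarrow> ginv c (xi, j) = (inv_step c ^^ n) (\<lambda>_. 0) (xi, j)"
  using inv_step_iterate_stable[of xi "Suc (length xi)" "n - Suc (length xi)" c j]
  by (simp add: ginv_def)

lemma gmult_ginv:
  fixes c :: "('m::finite, 'k::comm_ring_1) ser"
  shows "gmult c (ginv c) = (\<lambda>_. 0)"
proof
  fix p :: "'m::finite word \<times> 'm"
  obtain xi j where p: "p = (xi, j)" by force
  have "ginv c p = - mixed_comp c ((inv_step c ^^ length xi) (\<lambda>_. 0)) p"
    by (simp add: p ginv_def inv_step_apply)
  also have "\<dots> = - mixed_comp c (ginv c) p"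
    unfolding p by (rule arg_cong[of _ _ uminus], rule mixed_comp_cong_shorter) (simp add: ginv_eq_iterate)
  finally show "gmult c (ginv c) p = 0"
    by (simp add: gmult_def)
qed

lemma ginv_gmult: "gmult (ginv c) c = (\<lambda>_. 0)"
proof -
  have "gmult (ginv c) c = gmult (ginv c) (gmult c (gmult (ginv c) (ginv (ginv c))))"
    by (simp add: gmult_ginv)
  also have "\<dots> = gmult (gmult (ginv c) (gmult c (ginv c))) (ginv (ginv c))"
    by (simp only: gmult_assoc)
  also have "\<dots> = (\<lambda>_. 0)"
    by (simp add: gmult_ginv)
  finally show ?thesis .
qed

section \<open>Polynomial maps are Bastiani analytic\<close>

inductive poly_fun :: "(('i \<Rightarrow> 'k::real_normed_field) \<Rightarrow> 'k) \<Rightarrow> bool" where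
  poly_fun_const: "poly_fun (\<lambda>_. k)"
| poly_fun_coord: "poly_fun (\<lambda>x. x i)"
| poly_fun_add: "poly_fun f \<Longrightarrow> poly_fun g \<Longrightarrow> poly_fun (\<lambda>x. f x + g x)"
| poly_fun_mult: "poly_fun f \<Longrightarrow> poly_fun g \<Longrightarrow> poly_fun (\<lambda>x. f x * g x)"

lemma poly_fun_uminus: "poly_fun f \<Longrightarrow> poly_fun (\<lambda>x. - f x)"
  using poly_fun_mult[OF poly_fun_const[of "-1"]] by simp

lemma poly_fun_sum: "(\<And>i. i \<in> I \<Longrightarrow> poly_fun (f i)) \<Longrightarrow> poly_fun (\<lambda>x. \<Sum>i\<in>I. f i x)"
  by (induction I rule: infinite_finite_induct) (auto intro: poly_fun.intros)

lemma continuous_on_poly_fun: "poly_fun f \<Longrightarrow> continuous_on UNIV f"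
  by (induction rule: poly_fun.induct) (auto intro!: continuous_intros)

lemma poly_fun_compose: "poly_fun f \<Longrightarrow> (\<And>i. poly_fun (\<lambda>y. s y i)) \<Longrightarrow> poly_fun (\<lambda>y. f (s y))"
  by (induction rule: poly_fun.induct) (auto intro: poly_fun.intros)

text \<open>The pair (point z, direction w) is encoded as case_sum z w.\<close>
lemma poly_fun_line_derivative:
  assumes "poly_fun f"
  shows "\<exists>f'. poly_fun f' \<and>
    (\<forall>z w. ((\<lambda>t. f (\<lambda>i. z i + t * w i)) has_field_derivative f' (case_sum z w)) (at 0))"
  using assms
proof (induction rule: poly_fun.induct)
  case (poly_fun_const k)
  show ?case by (intro exI[of _ "\<lambda>_. 0"]) (auto intro: poly_fun.intros)
next
  case (poly_fun_coord i)
  show ?case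
    by (intro exI[of _ "\<lambda>y. y (Inr i)"]) (auto intro!: poly_fun.intros derivative_eq_intros)
next
  case (poly_fun_add f g)
  then obtain f' g' where "poly_fun f'" "poly_fun g'"
    "\<forall>z w. ((\<lambda>t. f (\<lambda>i. z i + t * w i)) has_field_derivative f' (case_sum z w)) (at 0)"
    "\<forall>z w. ((\<lambda>t. g (\<lambda>i. z i + t * w i)) has_field_derivative g' (case_sum z w)) (at 0)"
    by blast
  then show ?case
    by (intro exI[of _ "\<lambda>y. f' y + g' y"]) (auto intro!: poly_fun.intros DERIV_add)
next
  case (poly_fun_mult f g)
  then obtain f' g' where "poly_fun f'" "poly_fun g'" and
    f': "\<forall>z w. ((\<lambda>t. f (\<lambda>i. z i + t * w i)) has_field_derivative f' (case_sum z w)) (at 0)" and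
    g': "\<forall>z w. ((\<lambda>t. g (\<lambda>i. z i + t * w i)) has_field_derivative g' (case_sum z w)) (at 0)"
    by blast
  have "poly_fun (\<lambda>y. f (\<lambda>i. y (Inl i)))" "poly_fun (\<lambda>y. g (\<lambda>i. y (Inl i)))"
    using poly_fun_mult.hyps by (auto intro: poly_fun_compose poly_fun_coord)
  with \<open>poly_fun f'\<close> \<open>poly_fun g'\<close>
  have "poly_fun (\<lambda>y. f' y * g (\<lambda>i. y (Inl i)) + g' y * f (\<lambda>i. y (Inl i)))"
    by (intro poly_fun.intros)
  moreover have "((\<lambda>t. f (\<lambda>i. z i + t * w i) * g (\<lambda>i. z i + t * w i)) has_field_derivative
      f' (case_sum z w) * g z + g' (case_sum z w) * f z) (at 0)" for z w
    using DERIV_mult[OF f'[rule_format, of z w] g'[rule_format, of z w]] by (simp add: algebra_simps)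
  ultimately show ?case
    by (intro exI[of _ "\<lambda>y. f' y * g (\<lambda>i. y (Inl i)) + g' y * f (\<lambda>i. y (Inl i))"]) simp
qed

lemma tendsto_coordinatewise:
  fixes F :: "'a \<Rightarrow> 'j \<Rightarrow> 'b::topological_space"
  assumes "\<And>j. ((\<lambda>t. F t j) \<longlongrightarrow> L j) G"
  shows "(F \<longlongrightarrow> L) G"
proof -
  have "limitin (product_topology (\<lambda>_. euclidean) UNIV) F L G"
    unfolding limitin_componentwise using assms by simp
  then show ?thesis
    by (simp add: euclidean_product_topology)
qed

text \<open>A point x and a list of directions vs, packed into one vector: the iterated
  directional derivative cdd f vs x of a polynomial map is a polynomial in stack x vs.\<close>
definition stack :: "('i \<Rightarrow> 'k::zero) \<Rightarrow> ('i \<Rightarrow> 'k) list \<Rightarrow> 'i + nat \<times> 'i \<Rightarrow> 'k" where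
  "stack x vs = case_sum x (\<lambda>(n, i). if n < length vs then (vs ! n) i else 0)"

lemma continuous_on_stack:
  "continuous_on UNIV (\<lambda>p :: ('i \<Rightarrow> 'k::real_normed_vector) \<times> (nat \<Rightarrow> 'i \<Rightarrow> 'k). stack (fst p) (map (snd p) [0..<k]))"
proof (rule continuous_on_coordinatewise_then_product)
  have eval: "continuous_on UNIV (\<lambda>p. g p i)" if "continuous_on UNIV g" for g :: "_ \<Rightarrow> _ \<Rightarrow> 'b::topological_space" and i
    by (rule continuous_on_compose2[OF continuous_on_product_coordinates that]) auto
  have fst: "continuous_on UNIV (\<lambda>p :: ('i \<Rightarrow> 'k) \<times> (nat \<Rightarrow> 'i \<Rightarrow> 'k). fst p i)" for i
    by (rule eval[of fst]) (intro continuous_on_fst continuous_on_id)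
  have snd: "continuous_on UNIV (\<lambda>p :: ('i \<Rightarrow> 'k) \<times> (nat \<Rightarrow> 'i \<Rightarrow> 'k). snd p n i)" for n i
    by (rule eval[of "\<lambda>p. snd p n"], rule eval[of snd]) (intro continuous_on_snd continuous_on_id)
  fix a :: "'i + nat \<times> 'i"
  show "continuous_on UNIV (\<lambda>p :: ('i \<Rightarrow> 'k) \<times> (nat \<Rightarrow> 'i \<Rightarrow> 'k). stack (fst p) (map (snd p) [0..<k]) a)"
  proof (cases a)
    case (Inl i)
    then show ?thesis by (simp add: stack_def fst)
  next
    case (Inr b)
    then obtain n i where "a = Inr (n, i)" by (cases b) simp
    then show ?thesis by (cases "n < k") (simp_all add: stack_def snd)
  qed
qed

lemma cdd_Cons_tendsto_poly_fun:
  fixes f :: "('i \<Rightarrow> complex) \<Rightarrow> 'j \<Rightarrow> complex"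
  assumes "poly_fun P" and cdd_eq: "\<forall>x vs. length vs = k \<longrightarrow> cdd f vs x j = P (stack x vs)"
  shows "\<exists>P'. poly_fun P' \<and> (\<forall>x v vs. length vs = k \<longrightarrow>
    ((\<lambda>t. (cdd f vs (\<lambda>i. x i + t * v i) j - cdd f vs x j) / t) \<longlongrightarrow> P' (stack x (v # vs))) (at 0) \<and>
    cdd f (v # vs) x j = P' (stack x (v # vs)))"
proof -
  obtain Q where "poly_fun Q" and
    Q: "\<forall>z w. ((\<lambda>t. P (\<lambda>a. z a + t * w a)) has_field_derivative Q (case_sum z w)) (at 0)"
    using poly_fun_line_derivative[OF \<open>poly_fun P\<close>] by blast
  define shift :: "('i + nat \<times> 'i \<Rightarrow> complex) \<Rightarrow> ('i + nat \<times> 'i) + ('i + nat \<times> 'i) \<Rightarrow> complex" where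
    "shift y = case_sum (\<lambda>a. case a of Inl i \<Rightarrow> y (Inl i) | Inr (n, i) \<Rightarrow> y (Inr (Suc n, i)))
                        (\<lambda>a. case a of Inl i \<Rightarrow> y (Inr (0, i)) | Inr _ \<Rightarrow> 0)" for y
  have "poly_fun (\<lambda>y. shift y a)" for a
  proof (cases a)
    case (Inl b)
    then show ?thesis by (cases b) (auto simp: shift_def case_prod_beta intro: poly_fun.intros)
  next
    case (Inr b)
    then show ?thesis by (cases b) (auto simp: shift_def intro: poly_fun.intros)
  qed
  then have poly: "poly_fun (\<lambda>y. Q (shift y))"
    by (rule poly_fun_compose[OF \<open>poly_fun Q\<close>])
  have lim: "((\<lambda>t. (cdd f vs (\<lambda>i. x i + t * v i) j - cdd f vs x j) / t) \<longlongrightarrow> Q (shift (stack x (v # vs)))) (at 0)"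
    if "length vs = k" for x v vs
  proof -
    define w :: "'i + nat \<times> 'i \<Rightarrow> complex" where "w = case_sum v (\<lambda>_. 0)"
    have "stack (\<lambda>i. x i + t * v i) vs = (\<lambda>a. stack x vs a + t * w a)" for t
      by (auto simp: stack_def w_def fun_eq_iff split: sum.splits)
    then have quotient: "(\<lambda>t. (cdd f vs (\<lambda>i. x i + t * v i) j - cdd f vs x j) / t) =
        (\<lambda>t. (P (\<lambda>a. stack x vs a + t * w a) - P (stack x vs)) / t)"
      using cdd_eq that by simp
    have "shift (stack x (v # vs)) = case_sum (stack x vs) w"
      by (auto simp: shift_def stack_def w_def fun_eq_iff split: sum.splits)
    then show ?thesis
      using Q[rule_format, of "stack x vs" w] unfolding quotient DERIV_def by simp
  qed
  moreover have "cdd f (v # vs) x j = Q (shift (stack x (v # vs)))" if "length vs = k" for x v vs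
    using lim[OF that] by (simp add: tendsto_Lim)
  ultimately show ?thesis
    using poly by (intro exI[of _ "\<lambda>y. Q (shift y)"]) simp
qed

lemma cdd_poly_fun:
  fixes f :: "('i \<Rightarrow> complex) \<Rightarrow> 'j \<Rightarrow> complex"
  assumes "\<And>j. poly_fun (\<lambda>x. f x j)"
  shows "\<exists>P. poly_fun P \<and> (\<forall>x vs. length vs = k \<longrightarrow> cdd f vs x j = P (stack x vs))"
proof (induction k)
  case 0
  have "poly_fun (\<lambda>y. f (\<lambda>i. y (Inl i)) j)"
    by (rule poly_fun_compose[OF assms]) (rule poly_fun_coord)
  then show ?case
    by (intro exI[of _ "\<lambda>y. f (\<lambda>i. y (Inl i)) j"]) (simp add: stack_def)
next
  case (Suc k)
  then obtain P where "poly_fun P" and P: "\<forall>x vs. length vs = k \<longrightarrow> cdd f vs x j = P (stack x vs)"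
    by blast
  obtain P' where "poly_fun P'" and P': "\<forall>x v vs. length vs = k \<longrightarrow> cdd f (v # vs) x j = P' (stack x (v # vs))"
    using cdd_Cons_tendsto_poly_fun[OF \<open>poly_fun P\<close> P] by blast
  show ?case
    using P' by (intro exI[of _ P'] conjI \<open>poly_fun P'\<close>) (auto simp: length_Suc_conv)
qed

lemma bastiani_holomorphic_on_poly_fun:
  fixes f :: "('i \<Rightarrow> complex) \<Rightarrow> 'j \<Rightarrow> complex"
  assumes poly: "\<And>j. poly_fun (\<lambda>x. f x j)"
  shows "bastiani_holomorphic_on f UNIV"
  unfolding bastiani_holomorphic_on_def
proof (intro conjI ballI allI)
  show "continuous_on UNIV f"
    by (rule continuous_on_coordinatewise_then_product, rule continuous_on_poly_fun, rule poly)
next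
  fix x :: "'i \<Rightarrow> complex" and v vs
  show "((\<lambda>t. \<lambda>j. (cdd f vs (\<lambda>i. x i + t * v i) j - cdd f vs x j) / t) \<longlongrightarrow> cdd f (v # vs) x) (at 0)"
  proof (rule tendsto_coordinatewise)
    fix j
    obtain P where "poly_fun P" "\<forall>y ws. length ws = length vs \<longrightarrow> cdd f ws y j = P (stack y ws)"
      using cdd_poly_fun[where f = f and k = "length vs" and j = j, OF poly] by blast
    from cdd_Cons_tendsto_poly_fun[OF this] obtain P' where "\<forall>y u ws. length ws = length vs \<longrightarrow>
        ((\<lambda>t. (cdd f ws (\<lambda>i. y i + t * u i) j - cdd f ws y j) / t) \<longlongrightarrow> P' (stack y (u # ws))) (at 0) \<and>
        cdd f (u # ws) y j = P' (stack y (u # ws))"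
      by blast
    then show "((\<lambda>t. (cdd f vs (\<lambda>i. x i + t * v i) j - cdd f vs x j) / t) \<longlongrightarrow> cdd f (v # vs) x j) (at 0)"
      by simp
  qed
next
  fix k
  show "continuous_on (UNIV \<times> UNIV) (\<lambda>(x, V :: nat \<Rightarrow> 'i \<Rightarrow> complex). cdd f (map V [0..<k]) x)"
  proof (rule continuous_on_coordinatewise_then_product)
    fix j
    obtain P where "poly_fun P" and P: "\<forall>y ws. length ws = k \<longrightarrow> cdd f ws y j = P (stack y ws)"
      using cdd_poly_fun[where f = f and k = k and j = j, OF poly] by blast
    have "continuous_on UNIV (\<lambda>p :: ('i \<Rightarrow> complex) \<times> (nat \<Rightarrow> 'i \<Rightarrow> complex). P (stack (fst p) (map (snd p) [0..<k])))"
      by (rule continuous_on_compose2[OF continuous_on_poly_fun[OF \<open>poly_fun P\<close>] continuous_on_stack]) auto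
    then show "continuous_on (UNIV \<times> UNIV) (\<lambda>p. (case p of (x, V) \<Rightarrow> cdd f (map V [0..<k]) x) j)"
      by (simp add: P case_prod_beta)
  qed
qed simp

section \<open>Analyticity of the group operations\<close>

lemma poly_fun_shuffle:
  assumes "\<And>u. poly_fun (\<lambda>z. A z u)" "\<And>u. poly_fun (\<lambda>z. B z u)"
  shows "poly_fun (\<lambda>z. shuffle (A z) (B z) w)"
  unfolding shuffle_def case_prod_beta by (intro poly_fun_sum poly_fun.intros assms)

lemma poly_fun_lcons:
  assumes "\<And>u. poly_fun (\<lambda>z. E z u)"
  shows "poly_fun (\<lambda>z. lcons a (E z) w)"
proof (cases w)
  case (Cons b w')
  then show ?thesis
    using assms by (cases "b = a") (simp_all add: poly_fun_const)
qed (simp add: poly_fun_const)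

lemma poly_fun_phi:
  assumes "\<And>p. poly_fun (\<lambda>z. D z p)"
  shows "poly_fun (\<lambda>z. phi (D z) eta one_ser w)"
proof (induction eta arbitrary: w)
  case Nil
  show ?case by (simp add: poly_fun_const)
next
  case (Cons a eta)
  have "poly_fun (\<lambda>z. dcomp (D z) a u)" for u
    by (cases a) (simp_all add: dcomp_def poly_fun_const assms)
  then have "poly_fun (\<lambda>z. shuffle (dcomp (D z) a) (phi (D z) eta one_ser) u)" for u
    using Cons.IH by (rule poly_fun_shuffle)
  then show ?case
    unfolding phi.simps phi_letter_def by (intro poly_fun_add poly_fun_lcons Cons.IH)
qed

lemma poly_fun_mixed_comp:
  assumes "\<And>p. poly_fun (\<lambda>z. C z p)" "\<And>p. poly_fun (\<lambda>z. D z p)"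
  shows "poly_fun (\<lambda>z. mixed_comp (C z) (D z) p)"
  unfolding mixed_comp_def case_prod_beta
  by (intro poly_fun_sum poly_fun_mult assms poly_fun_phi)

lemma poly_fun_gmult:
  assumes "\<And>p. poly_fun (\<lambda>z. A z p)" "\<And>p. poly_fun (\<lambda>z. B z p)"
  shows "poly_fun (\<lambda>z. gmult (A z) (B z) p)"
  unfolding gmult_def by (intro poly_fun_add poly_fun_mixed_comp assms)

lemma poly_fun_ginv: "poly_fun (\<lambda>c :: ('m::finite, complex) ser. ginv c p)"
proof -
  have "poly_fun (\<lambda>c :: ('m, complex) ser. (inv_step c ^^ n) (\<lambda>_. 0) p)" for n p
  proof (induction n arbitrary: p)
    case 0
    show ?case by (simp add: poly_fun_const)
  next
    case (Suc n)
    obtain xi j where "p = (xi, j)" by force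
    then show ?case
      by (simp add: inv_step_apply) (intro poly_fun_uminus poly_fun_mixed_comp poly_fun_coord Suc.IH)
  qed
  then show ?thesis
    by (simp only: ginv_def)
qed

lemma shuffle_of_real:
  "shuffle (\<lambda>u. of_real (a u)) (\<lambda>u. of_real (b u)) w = (of_real (shuffle a b w) :: 'k::{real_algebra_1, comm_ring_1})"
  by (simp add: shuffle_def case_prod_beta)

lemma phi_of_real:
  "phi (\<lambda>p. of_real (d p)) eta (\<lambda>u. of_real (e u)) w = (of_real (phi d eta e w) :: 'k::{real_algebra_1, comm_ring_1})"
proof (induction eta arbitrary: w)
  case (Cons a eta)
  have "dcomp (\<lambda>p. of_real (d p)) a = (\<lambda>u. of_real (dcomp d a u) :: 'k)"
    by (cases a) (simp_all add: dcomp_def)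
  moreover have "phi (\<lambda>p. of_real (d p)) eta (\<lambda>u. of_real (e u)) = (\<lambda>u. of_real (phi d eta e u) :: 'k)"
    using Cons.IH by auto
  ultimately show ?case
    by (cases w) (simp_all add: phi_letter_def shuffle_of_real)
qed simp

lemma gmult_of_real:
  "gmult (\<lambda>p. of_real (a p)) (\<lambda>p. of_real (b p)) = (\<lambda>p. of_real (gmult a b p) :: 'k::{real_algebra_1, comm_ring_1})"
proof -
  have "(one_ser :: _ \<Rightarrow> 'k) = (\<lambda>u. of_real (one_ser u))"
    by (auto simp: one_ser_def)
  then have "phi (\<lambda>p. of_real (b p)) eta one_ser xi = (of_real (phi b eta one_ser xi) :: 'k)" for eta xi
    by (subst \<open>one_ser = _\<close>) (rule phi_of_real)
  then show ?thesis
    by (simp add: fun_eq_iff gmult_def mixed_comp_def case_prod_beta)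
qed

lemma ginv_unique:
  assumes "gmult c d = (\<lambda>_. 0)"
  shows "d = ginv c"
proof -
  have "d = gmult (gmult (ginv c) c) d"
    by (simp add: ginv_gmult)
  also have "\<dots> = gmult (ginv c) (gmult c d)"
    by (rule gmult_assoc)
  also have "\<dots> = ginv c"
    by (simp add: assms)
  finally show ?thesis .
qed

lemma ginv_of_real:
  "ginv (\<lambda>p. of_real (c p)) = (\<lambda>p. of_real (ginv c p) :: 'k::{real_algebra_1, comm_ring_1})"
  by (rule ginv_unique[symmetric]) (simp add: gmult_of_real gmult_ginv)

lemma bastiani_real_analytic_on_UNIV:
  assumes "bastiani_holomorphic_on g UNIV" "\<And>x. g (complex_of_real \<circ> x) = complex_of_real \<circ> f x"
  shows "bastiani_real_analytic_on f UNIV"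
  unfolding bastiani_real_analytic_on_def using assms by blast

theorem corollary5p2:
  shows "analytic_lie_group_C (gmult :: ('m::finite, complex) ser \<Rightarrow> _ \<Rightarrow> _) (\<lambda>_. 0)
       \<and> analytic_lie_group_R (gmult :: ('m::finite, real) ser \<Rightarrow> _ \<Rightarrow> _) (\<lambda>_. 0)"
proof
  have mult: "bastiani_holomorphic_on (\<lambda>z. gmult (z \<circ> Inl) (z \<circ> Inr) :: ('m, complex) ser) UNIV"
    by (intro bastiani_holomorphic_on_poly_fun poly_fun_gmult) (simp_all add: poly_fun_coord)
  have inv: "bastiani_holomorphic_on (ginv :: ('m, complex) ser \<Rightarrow> _) UNIV"
    by (intro bastiani_holomorphic_on_poly_fun poly_fun_ginv)
  show "analytic_lie_group_C (gmult :: ('m, complex) ser \<Rightarrow> _ \<Rightarrow> _) (\<lambda>_. 0)"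
    unfolding analytic_lie_group_C_def using gmult_assoc gmult_ginv ginv_gmult inv mult by (auto intro!: exI[of _ ginv])
  have "bastiani_real_analytic_on (\<lambda>z. gmult (z \<circ> Inl) (z \<circ> Inr) :: ('m, real) ser) UNIV"
    by (rule bastiani_real_analytic_on_UNIV[OF mult]) (simp add: o_def gmult_of_real)
  moreover have "bastiani_real_analytic_on (ginv :: ('m, real) ser \<Rightarrow> _) UNIV"
    by (rule bastiani_real_analytic_on_UNIV[OF inv]) (simp add: o_def ginv_of_real)
  ultimately show "analytic_lie_group_R (gmult :: ('m, real) ser \<Rightarrow> _ \<Rightarrow> _) (\<lambda>_. 0)"
    unfolding analytic_lie_group_R_def using gmult_assoc gmult_ginv ginv_gmult by (auto intro!: exI[of _ ginv])
qed

end
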